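(* Let $0\le\alpha<1$. The radius of starlikeness of order $\alpha$ of the class of analytic functions $f(z)=z+\sum_{n\ge2}a_nz^n$ on $\mathbb{D}$ with $a_2=0$ and $|a_n|\le n$ for all $n\ge3$ is the real root in $(0,1)$ of the equation \[2\big(1-\alpha+(2-\alpha)r\big)(1-r)^3=1-\alpha+(1+\alpha)r.\] In particular, the radius of starlikeness of this class is the root $r_0\approx0.253571$ of $2(1+2r)(1-r)^3=1+r$, and the radius of starlikeness of order $1/2$, which equals the radius of parabolic starlikeness of the class, is $1-\sqrt[3]{1/2}\approx0.206299$. These results are sharp.
   Context: $\mathbb{D}=\{z\in\mathbb{C}:|z|<1\}$. For a class $\mathcal{F}$ of analytic functions on $\mathbb{D}$ normalized by $f(0)=0$, $f'(0)=1$, and $0\le\alpha<1$, the radius of starlikeness of order $\alpha$ of $\mathcal{F}$ is the supremum of $r\in(0,1]$ such that every $f\in\mathcal{F}$ satisfies $f(z)\ne0$ for $0<|z|<r$ and $\operatorname{Re}\big(zf'(z)/f(z)\big)>\alpha$ for $|z|<r$ (the quotient being $1$ at $z=0$); the radius of starlikeness means the case $\alpha=0$. The radius of parabolic starlikeness of $\mathcal{F}$ is the supremum of $r\in(0,1]$ such that every $f\in\mathcal{F}$ satisfies $\operatorname{Re}\big(zf'(z)/f(z)\big)>\left|zf'(z)/f(z)-1\right|$ for $|z|<r$. *)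

theory Defs
  imports "HOL-Analysis.Analysis"
begin

text \<open>The class of the paper: analytic f(z) = z + sum_{n>=2} a_n z^n on the unit disk
  with a_2 = 0 and |a_n| <= n for n >= 3.  Functions are identified by their values
  on the unit disk, where they are given by their (convergent) power series.\<close>
definition classF :: "(complex \<Rightarrow> complex) set" where
  "classF = {f. \<exists>a :: nat \<Rightarrow> complex.
      a 0 = 0 \<and> a 1 = 1 \<and> a 2 = 0 \<and> (\<forall>n\<ge>3. norm (a n) \<le> real n) \<and>
      (\<forall>z\<in>ball 0 1. (\<lambda>n. a n * z ^ n) sums f z)}"

definition sq :: "(complex \<Rightarrow> complex) \<Rightarrow> complex \<Rightarrow> complex" where
  "sq f z = (if z = 0 then 1 else z * deriv f z / f z)"

definition starlike_order_upto :: "real \<Rightarrow> (complex \<Rightarrow> complex) \<Rightarrow> real \<Rightarrow> bool" where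
  "starlike_order_upto \<alpha> f r \<longleftrightarrow>
     (\<forall>z. 0 < norm z \<and> norm z < r \<longrightarrow> f z \<noteq> 0) \<and>
     (\<forall>z. norm z < r \<longrightarrow> Re (sq f z) > \<alpha>)"

definition radius_starlike_order :: "real \<Rightarrow> (complex \<Rightarrow> complex) set \<Rightarrow> real" where
  "radius_starlike_order \<alpha> F =
     Sup {r. 0 < r \<and> r \<le> 1 \<and> (\<forall>f\<in>F. starlike_order_upto \<alpha> f r)}"

definition radius_starlike :: "(complex \<Rightarrow> complex) set \<Rightarrow> real" where
  "radius_starlike F = radius_starlike_order 0 F"

definition radius_parabolic :: "(complex \<Rightarrow> complex) set \<Rightarrow> real" where
  "radius_parabolic F =
     Sup {r. 0 < r \<and> r \<le> 1 \<and>
          (\<forall>f\<in>F. \<forall>z. norm z < r \<longrightarrow> Re (sq f z) > norm (sq f z - 1))}"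

end

theory Submission
  imports Defs
begin

text \<open>
  For f in the class and |z| = r, comparing coefficients with the tails
  P(r) = sum_{n>=3} n r^n and Q(r) = sum_{n>=3} n^2 r^n gives |f(z) - z| <= P(r) and
  |z f'(z) - f(z)| <= Q(r) - P(r), hence |z f'(z) / f(z) - 1| <= (Q(r) - P(r)) / (r - P(r)).
  Clearing the denominators (1 - r)^2 and (1 - r)^3 of P and Q shows that this bound is
  below 1 - alpha exactly where 2 (1 - alpha + (2 - alpha) r) (1 - r)^3 - (1 - alpha + (1 + alpha) r)
  is positive, i.e. below its unique root in (0, 1).  The function z - sum_{n>=3} n z^n
  turns every estimate into an equality on the positive real axis, so the radius is sharp.
  The parabolic region lies between the disk |w - 1| < 1/2 and the half plane Re w > 1/2,
  so its radius is the radius of starlikeness of order 1/2.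
\<close>

lemma sums_tail_from:
  fixes g :: "nat \<Rightarrow> 'a::{t2_space,topological_ab_group_add}"
  assumes "g sums s"
  shows "(\<lambda>n. if k \<le> n then g n else 0) sums (s - (\<Sum>n<k. g n))"
proof -
  have "(\<lambda>n. if n \<in> {..<k} then 0 else g n) sums (s - (\<Sum>n<k. g n))"
    by (rule sums_If_finite_set'[OF assms]) (simp_all add: sum_negf)
  moreover have "(\<lambda>n. if n \<in> {..<k} then 0 else g n) = (\<lambda>n. if k \<le> n then g n else 0)"
    by auto
  ultimately show ?thesis by simp
qed

lemma powser_times_deriv_sums:
  fixes z :: "'a::{real_normed_field,banach}"
  assumes sums: "\<And>w. norm w < K \<Longrightarrow> (\<lambda>n. c n * w ^ n) sums f w" and z: "norm z < K"
  shows "(\<lambda>n. of_nat n * c n * z ^ n) sums (z * deriv f z)"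
proof -
  have "eventually (\<lambda>w. w \<in> norm -` {..<K}) (nhds z)"
    using z by (intro eventually_nhds_in_open open_vimage) (simp_all add: continuous_on_norm)
  then have ev: "eventually (\<lambda>w. (\<Sum>n. c n * w ^ n) = f w) (nhds z)"
    by eventually_elim (metis sums sums_unique lessThan_iff vimage_eq)
  have "((\<lambda>w. \<Sum>n. c n * w ^ n) has_field_derivative (\<Sum>n. diffs c n * z ^ n)) (at z)"
    by (intro termdiffs_strong'[OF _ z] sums_summable[OF sums])
  then have D: "(f has_field_derivative (\<Sum>n. diffs c n * z ^ n)) (at z)"
    by (simp add: DERIV_cong_ev[OF refl ev refl])
  have "(\<lambda>n. diffs c n * z ^ n) sums deriv f z"
    using termdiffs_sums_strong[OF sums D z] DERIV_imp_deriv[OF D] by simp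
  then have "(\<lambda>n. z * (diffs c n * z ^ n)) sums (z * deriv f z)"
    by (rule sums_mult)
  then have "(\<lambda>n. of_nat (Suc n) * c (Suc n) * z ^ Suc n) sums (z * deriv f z)"
    by (simp add: diffs_def algebra_simps)
  then show ?thesis
    by (subst (asm) sums_Suc_iff) simp
qed

lemma of_nat_times_power_sums:
  fixes z :: "'a::{real_normed_field,banach}"
  assumes "norm z < 1"
  shows "(\<lambda>n. of_nat n * z ^ n) sums (z / (1 - z)\<^sup>2)"
proof -
  have "z \<noteq> 1" using assms by auto
  then have "deriv (\<lambda>w. 1 / (1 - w)) z = 1 / (1 - z)\<^sup>2"
    by (intro DERIV_imp_deriv) (auto intro!: derivative_eq_intros simp: power2_eq_square)
  moreover have "(\<lambda>n. of_nat n * 1 * z ^ n) sums (z * deriv (\<lambda>w. 1 / (1 - w)) z)"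
    using assms by (intro powser_times_deriv_sums[where K = 1]) (simp_all add: geometric_sums)
  ultimately show ?thesis by simp
qed

lemma of_nat_sq_times_power_sums:
  fixes z :: "'a::{real_normed_field,banach}"
  assumes "norm z < 1"
  shows "(\<lambda>n. of_nat n ^ 2 * z ^ n) sums (z * (1 + z) / (1 - z) ^ 3)"
proof -
  have "1 - z \<noteq> 0" using assms by auto
  then have "deriv (\<lambda>w. w / (1 - w)\<^sup>2) z = (1 + z) / (1 - z) ^ 3"
    by (intro DERIV_imp_deriv) (auto intro!: derivative_eq_intros simp: divide_simps, algebra)
  moreover have "(\<lambda>n. of_nat n * of_nat n * z ^ n) sums (z * deriv (\<lambda>w. w / (1 - w)\<^sup>2) z)"
    using assms by (intro powser_times_deriv_sums[where K = 1] of_nat_times_power_sums) simp_all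
  ultimately show ?thesis by (simp add: power2_eq_square)
qed

definition tail1 :: "'a::real_normed_field \<Rightarrow> 'a" where
  "tail1 z = z / (1 - z)\<^sup>2 - z - 2 * z\<^sup>2"

definition tail2 :: "'a::real_normed_field \<Rightarrow> 'a" where
  "tail2 z = z * (1 + z) / (1 - z) ^ 3 - z - 4 * z\<^sup>2"

lemma tail1_sums:
  fixes z :: "'a::{real_normed_field,banach}"
  assumes "norm z < 1"
  shows "(\<lambda>n. if 3 \<le> n then of_nat n * z ^ n else 0) sums tail1 z"
  using sums_tail_from[OF of_nat_times_power_sums[OF assms], of 3]
  by (simp add: tail1_def eval_nat_numeral algebra_simps)

lemma tail2_sums:
  fixes z :: "'a::{real_normed_field,banach}"
  assumes "norm z < 1"
  shows "(\<lambda>n. if 3 \<le> n then of_nat n ^ 2 * z ^ n else 0) sums tail2 z"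
  using sums_tail_from[OF of_nat_sq_times_power_sums[OF assms], of 3]
  by (simp add: tail2_def eval_nat_numeral algebra_simps)

lemma tail1_of_real: "tail1 (of_real x) = of_real (tail1 x)"
  by (simp add: tail1_def)

lemma tail2_of_real: "tail2 (of_real x) = of_real (tail2 x)"
  by (simp add: tail2_def)

lemma classF_tail_bounds:
  assumes "f \<in> classF" and z: "norm z < 1"
  shows "norm (f z - z) \<le> tail1 (norm z)"
    and "norm (z * deriv f z - f z) \<le> tail2 (norm z) - tail1 (norm z)"
proof -
  obtain a where a: "a 0 = 0" "a 1 = 1" "a 2 = 0" and bd: "\<forall>n\<ge>3. norm (a n) \<le> real n"
    and "\<forall>w\<in>ball 0 1. (\<lambda>n. a n * w ^ n) sums f w"
    using assms(1) unfolding classF_def by blast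
  then have S: "\<And>w. norm w < 1 \<Longrightarrow> (\<lambda>n. a n * w ^ n) sums f w" by auto
  have low: "(\<Sum>n<3. a n * z ^ n) = z" "(\<Sum>n<3. of_nat n * a n * z ^ n) = z"
    using a by (simp_all add: eval_nat_numeral)
  have t1: "(\<lambda>n. if 3 \<le> n then a n * z ^ n else 0) sums (f z - z)"
    using sums_tail_from[OF S[OF z], of 3] low by simp
  have t2: "(\<lambda>n. if 3 \<le> n then of_nat n * a n * z ^ n else 0) sums (z * deriv f z - z)"
    using sums_tail_from[OF powser_times_deriv_sums[OF S z], of 3] low by simp
  show "norm (f z - z) \<le> tail1 (norm z)"
    by (rule norm_sums_le[OF t1 tail1_sums])
       (use bd z in \<open>auto simp: norm_mult norm_power intro: mult_right_mono\<close>)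
  have diff_sums: "(\<lambda>n. (if 3 \<le> n then of_nat n * a n * z ^ n else 0) - (if 3 \<le> n then a n * z ^ n else 0))
      sums (z * deriv f z - f z)"
    using sums_diff[OF t2 t1] by simp
  have diff_bound: "norm ((if 3 \<le> n then of_nat n * a n * z ^ n else 0) - (if 3 \<le> n then a n * z ^ n else 0))
      \<le> (if 3 \<le> n then real n ^ 2 * norm z ^ n else 0) - (if 3 \<le> n then real n * norm z ^ n else 0)"
    for n
  proof (cases "3 \<le> n")
    case True
    have "of_nat n * a n * z ^ n - a n * z ^ n = of_real (real n - 1) * (a n * z ^ n)"
      by (simp add: algebra_simps)
    then have "norm (of_nat n * a n * z ^ n - a n * z ^ n) = \<bar>real n - 1\<bar> * (norm (a n) * norm z ^ n)"
      by (simp only: norm_mult norm_of_real norm_power)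
    also have "\<dots> \<le> (real n - 1) * (real n * norm z ^ n)"
      using True bd by (auto intro!: mult_mono mult_right_mono)
    finally show ?thesis
      using True by (simp add: power2_eq_square algebra_simps)
  qed simp
  have r: "norm (norm z) < 1" using z by simp
  show "norm (z * deriv f z - f z) \<le> tail2 (norm z) - tail1 (norm z)"
    by (rule norm_sums_le[OF diff_sums sums_diff[OF tail2_sums[OF r] tail1_sums[OF r]]])
       (simp add: diff_bound)
qed

lemma quotient_close_to_one:
  fixes u w z :: "'a::real_normed_field"
  assumes "norm (w - z) \<le> p" "norm (u - w) \<le> q" "q < c * (norm z - p)" "0 < c"
  shows "w \<noteq> 0" "norm (u / w - 1) < c"
proof -
  have "0 < c * (norm z - p)" using assms(2,3) norm_ge_zero[of "u - w"] by linarith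
  then have pos: "0 < norm z - p" using assms(4) by (simp add: zero_less_mult_iff)
  have "norm z - p \<le> norm w"
    using assms(1) norm_triangle_ineq2[of z w] norm_minus_commute[of w z] by linarith
  with pos show "w \<noteq> 0" by auto
  then have "u / w - 1 = (u - w) / w" by (simp add: diff_divide_distrib)
  then have "norm (u / w - 1) = norm (u - w) / norm w" by (simp add: norm_divide)
  also have "\<dots> \<le> q / (norm z - p)"
    using assms(2) pos \<open>norm z - p \<le> norm w\<close> order_trans[OF norm_ge_zero assms(2)]
    by (intro frac_le) auto
  also have "\<dots> < c"
    using assms(3) pos by (simp add: divide_less_eq mult.commute)
  finally show "norm (u / w - 1) < c" .
qed

definition radius_poly :: "real \<Rightarrow> real \<Rightarrow> real" where
  "radius_poly \<alpha> r = 2 * (1 - \<alpha> + (2 - \<alpha>) * r) * (1 - r) ^ 3 - (1 - \<alpha> + (1 + \<alpha>) * r)"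

lemma radius_poly_identity:
  assumes "r \<noteq> 1"
  shows "r * radius_poly \<alpha> r = (1 - r) ^ 3 * ((1 - \<alpha>) * (r - tail1 r) - (tail2 r - tail1 r))"
proof -
  have d: "1 - r \<noteq> 0" using assms by simp
  have "(1 - r) ^ 3 * tail1 r = r * (1 - r) - (r + 2 * r\<^sup>2) * (1 - r) ^ 3"
    using d unfolding tail1_def by (simp add: field_simps) algebra
  moreover have "(1 - r) ^ 3 * tail2 r = r * (1 + r) - (r + 4 * r\<^sup>2) * (1 - r) ^ 3"
    using d unfolding tail2_def by (simp add: field_simps)
  ultimately show ?thesis
    unfolding radius_poly_def by algebra
qed

lemma radius_poly_pos_iff:
  assumes "0 < r" "r < 1"
  shows "0 < radius_poly \<alpha> r \<longleftrightarrow> tail2 r - tail1 r < (1 - \<alpha>) * (r - tail1 r)"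
proof -
  have "0 < radius_poly \<alpha> r \<longleftrightarrow> 0 < r * radius_poly \<alpha> r"
    using assms by (simp add: zero_less_mult_iff)
  also have "\<dots> \<longleftrightarrow> 0 < (1 - \<alpha>) * (r - tail1 r) - (tail2 r - tail1 r)"
    using assms by (simp add: radius_poly_identity zero_less_mult_iff)
  finally show ?thesis by simp
qed

lemma radius_poly_strict_decreasing:
  assumes "0 \<le> \<alpha>" "\<alpha> < 1" "0 \<le> x" "x < y" "y \<le> 1"
  shows "radius_poly \<alpha> y < radius_poly \<alpha> x"
proof (rule DERIV_neg_imp_decreasing[OF \<open>x < y\<close>])
  fix r assume r: "x \<le> r" "r \<le> y"
  define B where "B = -2 + 4 * \<alpha> - 8 * (2 - \<alpha>) * r"
  have "DERIV (radius_poly \<alpha>) r :> (1 - r)\<^sup>2 * B - (1 + \<alpha>)"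
    unfolding radius_poly_def[abs_def] B_def
    by (rule derivative_eq_intros refl | simp)+ (simp add: algebra_simps power2_eq_square power3_eq_cube)
  moreover have "(1 - r)\<^sup>2 * B \<le> max 0 B"
    using assms r by (cases "B \<le> 0")
      (auto simp: mult_nonneg_nonpos power_le_one intro!: mult_left_le_one_le)
  moreover have "B \<le> -2 + 4 * \<alpha>"
    using assms r by (simp add: B_def)
  ultimately show "\<exists>d. DERIV (radius_poly \<alpha>) r :> d \<and> d < 0"
    using assms by (intro exI[of _ "(1 - r)\<^sup>2 * B - (1 + \<alpha>)"]) auto
qed

lemma radius_poly_root_unique:
  assumes "0 \<le> \<alpha>" "\<alpha> < 1"
  shows "\<exists>!r. 0 < r \<and> r < 1 \<and> radius_poly \<alpha> r = 0"
proof -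
  have "radius_poly \<alpha> 1 \<le> 0" "0 \<le> radius_poly \<alpha> 0"
    using assms by (simp_all add: radius_poly_def)
  moreover have "continuous_on {0..1} (radius_poly \<alpha>)"
    unfolding radius_poly_def by (intro continuous_intros)
  ultimately obtain r where r: "0 \<le> r" "r \<le> 1" "radius_poly \<alpha> r = 0"
    using IVT2'[of "radius_poly \<alpha>" 1 0 0] by auto
  moreover have "r \<noteq> 0" "r \<noteq> 1"
    using r assms by (auto simp: radius_poly_def)
  moreover have "s = r" if "0 < s" "s < 1" "radius_poly \<alpha> s = 0" for s
    using radius_poly_strict_decreasing[OF assms, of r s] radius_poly_strict_decreasing[OF assms, of s r]
      r that by (cases s r rule: linorder_cases) auto
  ultimately show ?thesis
    by (intro ex1I[of _ r]) auto
qed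

lemma radius_poly_root_less:
  assumes "0 \<le> \<alpha>" "\<alpha> < 1" "r < 1" "radius_poly \<alpha> r = 0"
  shows "r < 3/10"
proof (rule ccontr)
  assume "\<not> r < 3/10"
  then have "r = 3/10 \<or> 3/10 < r" by auto
  then have "radius_poly \<alpha> r \<le> radius_poly \<alpha> (3/10)"
  proof
    assume "3/10 < r"
    then show ?thesis
      using radius_poly_strict_decreasing[OF assms(1,2), of "3/10" r] assms(3) by simp
  qed (metis order_refl)
  moreover have "radius_poly \<alpha> (3/10) = - (2024 + 1918 * \<alpha>) / 10000"
    by (simp add: radius_poly_def field_simps power3_eq_cube)
  ultimately show False
    using assms by simp
qed

lemma tail1_less:
  fixes x :: real
  assumes "0 < x" "x < 3/10"
  shows "tail1 x < x"
proof -
  have "x * x < 3/10 * x" "0 \<le> x * x * x"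
    using assms by (simp_all add: mult_strict_right_mono)
  moreover have "(2 + 2 * x) * (1 - x)\<^sup>2 = 2 - 2 * x - 2 * (x * x) + 2 * (x * x * x)"
    by (simp add: power2_eq_square algebra_simps)
  ultimately have "1 < (2 + 2 * x) * (1 - x)\<^sup>2"
    using assms by linarith
  then have "x / (1 - x)\<^sup>2 < x * (2 + 2 * x)"
    using assms by (simp add: divide_less_eq mult.assoc)
  then show ?thesis
    by (simp add: tail1_def algebra_simps power2_eq_square)
qed

lemma norm_diff_one_less_imp_Re_greater:
  assumes "norm (w - 1) < 1 - \<alpha>"
  shows "\<alpha> < Re w"
  using abs_Re_le_cmod[of "w - 1"] assms by simp

lemma classF_sq_near_one:
  assumes "0 \<le> \<alpha>" "\<alpha> < 1" "radius_poly \<alpha> r0 = 0" "r0 \<le> 1"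
    and "f \<in> classF" "0 < norm z" "norm z < r0"
  shows "f z \<noteq> 0" "norm (sq f z - 1) < 1 - \<alpha>"
proof -
  have "0 < radius_poly \<alpha> (norm z)"
    using radius_poly_strict_decreasing[OF assms(1,2), of "norm z" r0] assms by simp
  then have "tail2 (norm z) - tail1 (norm z) < (1 - \<alpha>) * (norm z - tail1 (norm z))"
    using assms radius_poly_pos_iff by simp
  note close = quotient_close_to_one[OF classF_tail_bounds[OF assms(5)] this]
  show "f z \<noteq> 0" "norm (sq f z - 1) < 1 - \<alpha>"
    using close assms by (simp_all add: sq_def)
qed

definition extremal :: "complex \<Rightarrow> complex" where
  "extremal z = z - tail1 z"

definition extremal_coeff :: "nat \<Rightarrow> complex" where
  "extremal_coeff n = (if n = 1 then 1 else if 3 \<le> n then - of_nat n else 0)"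

lemma extremal_sums:
  assumes "norm w < 1"
  shows "(\<lambda>n. extremal_coeff n * w ^ n) sums extremal w"
proof -
  have "(\<lambda>n. (if n = 1 then w ^ n else 0) - (if 3 \<le> n then of_nat n * w ^ n else 0)) sums (w - tail1 w)"
    using sums_diff[OF sums_single[of 1 "\<lambda>n. w ^ n"] tail1_sums[OF assms]] by simp
  moreover have "(\<lambda>n. (if n = 1 then w ^ n else 0) - (if 3 \<le> n then of_nat n * w ^ n else 0))
      = (\<lambda>n. extremal_coeff n * w ^ n)"
    by (auto simp: extremal_coeff_def)
  ultimately show ?thesis
    by (simp add: extremal_def)
qed

lemma extremal_in_classF: "extremal \<in> classF"
proof -
  have "\<forall>w\<in>ball 0 1. (\<lambda>n. extremal_coeff n * w ^ n) sums extremal w"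
    by (simp add: extremal_sums)
  then show ?thesis
    unfolding classF_def by (intro CollectI exI[of _ extremal_coeff]) (simp add: extremal_coeff_def)
qed

lemma sq_extremal:
  assumes "0 < x" "x < 1"
  shows "sq extremal (of_real x) = of_real ((x - tail2 x) / (x - tail1 x))"
proof -
  let ?z = "complex_of_real x"
  have "(\<lambda>n. of_nat n * extremal_coeff n * ?z ^ n) sums (?z * deriv extremal ?z)"
    using assms extremal_sums by (intro powser_times_deriv_sums[where K = 1]) auto
  moreover have "(\<lambda>n. (if n = 1 then ?z ^ n else 0) - (if 3 \<le> n then of_nat n ^ 2 * ?z ^ n else 0))
      sums (?z - tail2 ?z)"
    using sums_diff[OF sums_single[of 1 "\<lambda>n. ?z ^ n"] tail2_sums[of ?z]] assms by simp
  moreover have "(\<lambda>n. (if n = 1 then ?z ^ n else 0) - (if 3 \<le> n then of_nat n ^ 2 * ?z ^ n else 0))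
      = (\<lambda>n. of_nat n * extremal_coeff n * ?z ^ n)"
    by (auto simp: extremal_coeff_def power2_eq_square)
  ultimately have "?z * deriv extremal ?z = ?z - tail2 ?z"
    by (simp add: sums_unique2)
  then show ?thesis
    using assms by (simp add: sq_def extremal_def tail1_of_real tail2_of_real)
qed

lemma extremal_sq_le_beyond_root:
  assumes "0 \<le> \<alpha>" "\<alpha> < 1" "0 < r0" "r0 < 1" "radius_poly \<alpha> r0 = 0" "r0 < r"
  obtains x where "0 < x" "x < r" "Im (sq extremal (of_real x)) = 0" "Re (sq extremal (of_real x)) \<le> \<alpha>"
proof -
  \<comment> \<open>Below 3/10 the value of the extremal function stays positive, so the quotient is genuine.\<close>
  define x where "x = (r0 + min r (3/10)) / 2"
  have r0: "r0 < 3/10"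
    using radius_poly_root_less assms by blast
  then have x: "0 < x" "x < r" "x < 3/10" "r0 < x"
    using assms by (auto simp: x_def)
  then have "\<not> 0 < radius_poly \<alpha> x"
    using radius_poly_strict_decreasing[OF assms(1,2), of r0 x] assms by simp
  then have "(1 - \<alpha>) * (x - tail1 x) \<le> tail2 x - tail1 x"
    using radius_poly_pos_iff[of x \<alpha>] x by simp
  moreover have "0 < x - tail1 x"
    using tail1_less x by simp
  ultimately have "(x - tail2 x) / (x - tail1 x) \<le> \<alpha>"
    by (simp add: divide_le_eq algebra_simps)
  then show thesis
    using that x sq_extremal[of x] by simp
qed

lemma classF_starlike_order_upto:
  assumes "0 \<le> \<alpha>" "\<alpha> < 1" "radius_poly \<alpha> r0 = 0" "r0 \<le> 1" "f \<in> classF" "r \<le> r0"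
  shows "starlike_order_upto \<alpha> f r"
  using classF_sq_near_one[OF assms(1-5)] norm_diff_one_less_imp_Re_greater assms
  by (auto simp: starlike_order_upto_def sq_def)

lemma Sup_radius_eq:
  fixes r0 :: real
  assumes "0 < r0" "r0 \<le> 1" "\<And>r. 0 < r \<Longrightarrow> P r \<longleftrightarrow> r \<le> r0"
  shows "Sup {r. 0 < r \<and> r \<le> 1 \<and> P r} = r0"
proof -
  have "{r. 0 < r \<and> r \<le> 1 \<and> P r} = {0<..r0}"
    using assms by auto
  then show ?thesis
    using assms(1) by simp
qed

lemma radius_starlike_order_classF:
  assumes "0 \<le> \<alpha>" "\<alpha> < 1" "0 < r0" "r0 < 1" "radius_poly \<alpha> r0 = 0"
  shows "radius_starlike_order \<alpha> classF = r0"
  unfolding radius_starlike_order_def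
proof (rule Sup_radius_eq)
  fix r :: real assume "0 < r"
  show "(\<forall>f\<in>classF. starlike_order_upto \<alpha> f r) \<longleftrightarrow> r \<le> r0"
  proof
    assume all: "\<forall>f\<in>classF. starlike_order_upto \<alpha> f r"
    show "r \<le> r0"
    proof (rule ccontr)
      assume "\<not> r \<le> r0"
      then obtain x where x: "0 < x" "x < r" "Re (sq extremal (of_real x)) \<le> \<alpha>"
        using extremal_sq_le_beyond_root[OF assms, of r] by auto
      have "starlike_order_upto \<alpha> extremal r"
        using all extremal_in_classF by blast
      then have "\<alpha> < Re (sq extremal (of_real x))"
        using x unfolding starlike_order_upto_def by simp
      then show False
        using x by simp
    qed
  qed (use assms classF_starlike_order_upto[of \<alpha> r0] in auto)
qed (use assms in auto)

lemma radius_parabolic_classF: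
  assumes "0 < r0" "r0 < 1" "radius_poly (1/2) r0 = 0"
  shows "radius_parabolic classF = r0"
  unfolding radius_parabolic_def
proof (rule Sup_radius_eq)
  fix r :: real assume "0 < r"
  show "(\<forall>f\<in>classF. \<forall>z. norm z < r \<longrightarrow> norm (sq f z - 1) < Re (sq f z)) \<longleftrightarrow> r \<le> r0"
  proof
    assume all: "\<forall>f\<in>classF. \<forall>z. norm z < r \<longrightarrow> norm (sq f z - 1) < Re (sq f z)"
    show "r \<le> r0"
    proof (rule ccontr)
      assume "\<not> r \<le> r0"
      then obtain x where x: "0 < x" "x < r" "Im (sq extremal (of_real x)) = 0"
          "Re (sq extremal (of_real x)) \<le> 1/2"
        using extremal_sq_le_beyond_root[of "1/2" r0 r] assms by auto
      have "\<bar>Re (sq extremal (of_real x)) - 1\<bar> \<le> norm (sq extremal (of_real x) - 1)"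
        using abs_Re_le_cmod[of "sq extremal (of_real x) - 1"] by simp
      moreover have "norm (sq extremal (of_real x) - 1) < Re (sq extremal (of_real x))"
        using all extremal_in_classF x by simp
      ultimately show False
        using x by linarith
    qed
  next
    assume "r \<le> r0"
    have "norm (sq f z - 1) < Re (sq f z)" if "f \<in> classF" "0 < norm z" "norm z < r" for f z
    proof -
      have "norm (sq f z - 1) < 1/2"
        using classF_sq_near_one[of "1/2" r0 f z] assms that \<open>r \<le> r0\<close> by simp
      moreover have "1/2 < Re (sq f z)"
        using norm_diff_one_less_imp_Re_greater[of "sq f z" "1/2"] calculation by simp
      ultimately show ?thesis by simp
    qed
    then show "\<forall>f\<in>classF. \<forall>z. norm z < r \<longrightarrow> norm (sq f z - 1) < Re (sq f z)"
      by (auto simp: sq_def)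
  qed
qed (use assms in auto)

lemma radius_poly_half_root:
  "0 < 1 - root 3 (1/2)" "1 - root 3 (1/2) < 1" "radius_poly (1/2) (1 - root 3 (1/2)) = 0"
proof -
  define t where "t = root 3 (1/2::real)"
  have t: "0 < t" "t < 1" "t ^ 3 = 1/2"
    unfolding t_def by (auto intro: real_root_gt_zero)
  have "radius_poly (1/2) (1 - t) = (1/2 + 3/2 * (1 - t)) * (2 * t ^ 3 - 1)"
    unfolding radius_poly_def by (simp add: field_simps power3_eq_cube)
  with t show "0 < 1 - root 3 (1/2)" "1 - root 3 (1/2) < 1" "radius_poly (1/2) (1 - root 3 (1/2)) = 0"
    unfolding t_def by simp_all
qed

lemma radius_poly_zero_root_near:
  obtains r0 where "2535705/10^7 \<le> r0" "r0 \<le> 2535715/10^7" "radius_poly 0 r0 = 0"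
proof -
  have "radius_poly 0 (2535715/10^7) \<le> 0" "0 \<le> radius_poly 0 (2535705/10^7)"
    by (simp_all add: radius_poly_def power3_eq_cube)
  moreover have "continuous_on {2535705/10^7..2535715/10^7} (radius_poly 0)"
    unfolding radius_poly_def by (intro continuous_intros)
  ultimately show thesis
    using IVT2'[of "radius_poly 0" "2535715/10^7" 0 "2535705/10^7"] that by auto
qed

theorem corollary2p3:
  shows "(\<forall>\<alpha>::real. 0 \<le> \<alpha> \<and> \<alpha> < 1 \<longrightarrow>
            (\<exists>!r. 0 < r \<and> r < 1 \<and>
                  2 * (1 - \<alpha> + (2 - \<alpha>) * r) * (1 - r) ^ 3 = 1 - \<alpha> + (1 + \<alpha>) * r)
          \<and> (\<forall>r. 0 < r \<and> r < 1 \<and>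
                  2 * (1 - \<alpha> + (2 - \<alpha>) * r) * (1 - r) ^ 3 = 1 - \<alpha> + (1 + \<alpha>) * r
               \<longrightarrow> radius_starlike_order \<alpha> classF = r))
       \<and> (\<exists>r0::real. 0 < r0 \<and> r0 < 1 \<and> 2 * (1 + 2 * r0) * (1 - r0) ^ 3 = 1 + r0
              \<and> \<bar>r0 - 0.253571\<bar> < 0.000001 \<and> radius_starlike classF = r0)
       \<and> radius_starlike_order (1/2) classF = 1 - root 3 (1/2)
       \<and> radius_parabolic classF = 1 - root 3 (1/2)"
proof -
  have root_eq: "2 * (1 - \<alpha> + (2 - \<alpha>) * r) * (1 - r) ^ 3 = 1 - \<alpha> + (1 + \<alpha>) * r
      \<longleftrightarrow> radius_poly \<alpha> r = 0" for \<alpha> r :: real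
    by (simp add: radius_poly_def)
  obtain r0 where r0: "2535705/10^7 \<le> r0" "r0 \<le> 2535715/10^7" "radius_poly 0 r0 = 0"
    by (rule radius_poly_zero_root_near)
  moreover have "\<bar>r0 - 0.253571\<bar> < 0.000001"
    unfolding abs_less_iff using r0 by simp
  ultimately have "0 < r0 \<and> r0 < 1 \<and> 2 * (1 + 2 * r0) * (1 - r0) ^ 3 = 1 + r0
      \<and> \<bar>r0 - 0.253571\<bar> < 0.000001 \<and> radius_starlike classF = r0"
    using root_eq[of 0 r0] radius_starlike_order_classF[of 0 r0] by (simp add: radius_starlike_def)
  moreover have "\<forall>\<alpha>::real. 0 \<le> \<alpha> \<and> \<alpha> < 1 \<longrightarrow> (\<exists>!r. 0 < r \<and> r < 1 \<and> radius_poly \<alpha> r = 0)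
      \<and> (\<forall>r. 0 < r \<and> r < 1 \<and> radius_poly \<alpha> r = 0 \<longrightarrow> radius_starlike_order \<alpha> classF = r)"
    using radius_poly_root_unique radius_starlike_order_classF by simp
  moreover have "radius_starlike_order (1/2) classF = 1 - root 3 (1/2)"
      "radius_parabolic classF = 1 - root 3 (1/2)"
    using radius_poly_half_root by (simp_all add: radius_starlike_order_classF radius_parabolic_classF)
  ultimately show ?thesis
    unfolding root_eq by blast
qed

end
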